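(* Let $G$ be a finite connected graph with chromatic number $\chi$ and let $c$ be a nice $\chi$-coloring of $G$. Then $h(c)\ge 2\chi-1$.
   Context: A proper $\chi$-coloring is a map $c:V(G)\to\{1,\dots,\chi\}$ with adjacent vertices receiving different colors; colors are considered modulo $\chi$. For such $c$, $D_c$ is the oriented graph on $V(G)$ with an arc $ab$ if and only if $\{a,b\}\in E(G)$ and $c(b)\equiv c(a)+1\pmod{\chi}$. The coloring $c$ is nice if $D_c$ is acyclic and has exactly one sink (vertex of out-degree $0$). For an acyclic oriented graph $D$, its level partition is the unique partition $(V_1,\dots,V_k)$ of $V(D)$ such that $V_i$ is the set of sinks of the subdigraph of $D$ induced on $V(D)\setminus(V_1\cup\dots\cup V_{i-1})$; $k$ is the height of the partition. The height $h(c)$ of a nice coloring $c$ is the height of the level partition of $D_c$, equivalently the number of vertices in a longest oriented path of $D_c$. *)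

theory Defs
  imports Main
begin

definition graph :: "'a set \<Rightarrow> ('a \<Rightarrow> 'a \<Rightarrow> bool) \<Rightarrow> bool" where
  "graph V E \<longleftrightarrow> finite V \<and> (\<forall>a b. E a b \<longrightarrow> a \<in> V \<and> b \<in> V)
     \<and> (\<forall>a b. E a b \<longrightarrow> E b a) \<and> (\<forall>a. \<not> E a a)"

definition connected_graph :: "'a set \<Rightarrow> ('a \<Rightarrow> 'a \<Rightarrow> bool) \<Rightarrow> bool" where
  "connected_graph V E \<longleftrightarrow> V \<noteq> {} \<and> (\<forall>a\<in>V. \<forall>b\<in>V. E\<^sup>*\<^sup>* a b)"

definition proper_coloring :: "'a set \<Rightarrow> ('a \<Rightarrow> 'a \<Rightarrow> bool) \<Rightarrow> nat \<Rightarrow> ('a \<Rightarrow> nat) \<Rightarrow> bool" where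
  "proper_coloring V E k c \<longleftrightarrow> (\<forall>v\<in>V. c v \<in> {1..k}) \<and> (\<forall>a b. E a b \<longrightarrow> c a \<noteq> c b)"

definition chromatic_number :: "'a set \<Rightarrow> ('a \<Rightarrow> 'a \<Rightarrow> bool) \<Rightarrow> nat" where
  "chromatic_number V E = (LEAST k. \<exists>c. proper_coloring V E k c)"

definition Dc_arc :: "('a \<Rightarrow> 'a \<Rightarrow> bool) \<Rightarrow> nat \<Rightarrow> ('a \<Rightarrow> nat) \<Rightarrow> 'a \<Rightarrow> 'a \<Rightarrow> bool" where
  "Dc_arc E k c a b \<longleftrightarrow> E a b \<and> c b mod k = (c a + 1) mod k"

definition Dc_acyclic :: "('a \<Rightarrow> 'a \<Rightarrow> bool) \<Rightarrow> nat \<Rightarrow> ('a \<Rightarrow> nat) \<Rightarrow> bool" where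
  "Dc_acyclic E k c \<longleftrightarrow> (\<forall>a. \<not> (Dc_arc E k c)\<^sup>+\<^sup>+ a a)"

definition Dc_sinks :: "'a set \<Rightarrow> ('a \<Rightarrow> 'a \<Rightarrow> bool) \<Rightarrow> nat \<Rightarrow> ('a \<Rightarrow> nat) \<Rightarrow> 'a set" where
  "Dc_sinks V E k c = {a \<in> V. \<not> (\<exists>b. Dc_arc E k c a b)}"

definition nice_coloring :: "'a set \<Rightarrow> ('a \<Rightarrow> 'a \<Rightarrow> bool) \<Rightarrow> nat \<Rightarrow> ('a \<Rightarrow> nat) \<Rightarrow> bool" where
  "nice_coloring V E k c \<longleftrightarrow> proper_coloring V E k c \<and> Dc_acyclic E k c
     \<and> card (Dc_sinks V E k c) = 1"

definition Dc_path :: "'a set \<Rightarrow> ('a \<Rightarrow> 'a \<Rightarrow> bool) \<Rightarrow> nat \<Rightarrow> ('a \<Rightarrow> nat) \<Rightarrow> 'a list \<Rightarrow> bool" where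
  "Dc_path V E k c xs \<longleftrightarrow> xs \<noteq> [] \<and> distinct xs \<and> set xs \<subseteq> V
     \<and> successively (Dc_arc E k c) xs"

definition height :: "'a set \<Rightarrow> ('a \<Rightarrow> 'a \<Rightarrow> bool) \<Rightarrow> nat \<Rightarrow> ('a \<Rightarrow> nat) \<Rightarrow> nat" where
  "height V E k c = Max {length xs | xs. Dc_path V E k c xs}"

end

theory Submission
  imports Defs
begin

text \<open>
  Let the level of a vertex v be the number of vertices of a longest oriented path of
  D_c starting at v. Because D_c is acyclic, such a path cannot be extended at its end,
  so it ends at the unique sink s; colours increase by one along arcs, hence
  c(v) + level(v) = c(s) + 1 modulo \<chi>, and levels strictly decrease along arcs.
  If h(c) < 2\<chi> - 1, the levels modulo \<chi> - 1 form a proper (\<chi> - 1)-colouring: on an edge ab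
  whose levels agree modulo \<chi> - 1 they differ by 0 or by \<chi> - 1; the first contradicts
  c(a) \<noteq> c(b), the second forces an arc from the lower to the higher level.
\<close>

lemma successively_rtranclp_hd:
  "successively R xs \<Longrightarrow> y \<in> set xs \<Longrightarrow> R\<^sup>*\<^sup>* (hd xs) y"
  by (induction xs rule: induct_list012) (auto intro: converse_rtranclp_into_rtranclp)

lemma successively_rtranclp_last:
  "successively R xs \<Longrightarrow> y \<in> set xs \<Longrightarrow> R\<^sup>*\<^sup>* y (last xs)"
  by (induction xs arbitrary: y rule: induct_list012)
     (auto intro: converse_rtranclp_into_rtranclp)

lemma mod_add_cancel_right_nat:
  "((a::nat) + c) mod k = (b + c) mod k \<longleftrightarrow> a mod k = b mod k"
  by (simp add: nat_mod_eq_iff)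

lemma inj_on_mod_atLeastAtMost: "inj_on (\<lambda>x::nat. x mod k) {1..k}"
proof (rule inj_onI)
  fix x y :: nat
  assume "x \<in> {1..k}" "y \<in> {1..k}" "x mod k = y mod k"
  then show "x = y"
    by (cases "x = k"; cases "y = k") auto
qed

lemma mod_eq_Suc_if_shifted_congruent:
  fixes k x y a b :: nat
  assumes "2 \<le> k" "x \<in> {1..k}" "y \<in> {1..k}" "x \<noteq> y" "1 \<le> b" "b \<le> a" "a < 2 * k - 1"
    and congr_k: "(x + a) mod k = (y + b) mod k"
    and congr_pred_k: "a mod (k - 1) = b mod (k - 1)"
  shows "x mod k = (y + 1) mod k"
proof -
  obtain q where q: "a = b + (k - 1) * q"
    using congr_pred_k \<open>b \<le> a\<close> by (metis mod_eq_dvd_iff_nat dvd_def le_add_diff_inverse)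
  have "(k - 1) * q < (k - 1) * 2"
    using q assms(1,5,7) by linarith
  then have "q < 2" by simp
  moreover have "q \<noteq> 0"
  proof
    assume "q = 0"
    then have "x mod k = y mod k"
      using congr_k q mod_add_cancel_right_nat by simp
    then show False
      using inj_onD[OF inj_on_mod_atLeastAtMost] assms(2-4) by blast
  qed
  ultimately have "q = 1"
    by simp
  with q assms(1) have shift: "x + a + 1 = x + b + k"
    by simp
  have "(x + b) mod k = (x + b + k) mod k"
    by simp
  also have "\<dots> = (x + a + 1) mod k"
    by (simp only: shift)
  also have "\<dots> = (y + 1 + b) mod k"
    using congr_k by (metis add.commute add.left_commute mod_add_left_eq)
  finally show ?thesis
    by (simp only: mod_add_cancel_right_nat)
qed

lemma Dc_arcs_color_mod:
  assumes "successively (Dc_arc E k c) xs" "xs \<noteq> []"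
  shows "(c (hd xs) + length xs) mod k = (c (last xs) + 1) mod k"
  using assms
proof (induction xs rule: induct_list012)
  case (3 x y zs)
  then have IH: "(c y + length (y # zs)) mod k = (c (last (y # zs)) + 1) mod k"
    and arc: "c y mod k = (c x + 1) mod k"
    by (auto simp: Dc_arc_def)
  have "(c x + length (x # y # zs)) mod k = ((c x + 1) mod k + length (y # zs)) mod k"
    unfolding mod_add_left_eq by simp
  also have "\<dots> = (c y + length (y # zs)) mod k"
    by (simp only: arc[symmetric] mod_add_left_eq)
  also have "\<dots> = (c (last (x # y # zs)) + 1) mod k"
    using IH by (metis last_ConsR list.distinct(1))
  finally show ?case
    by (simp only: list.sel(1))
qed simp_all

lemma graph_finite: "graph V E \<Longrightarrow> finite V"
  unfolding graph_def by blast

lemma graph_edgeD: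
  assumes "graph V E" "E a b"
  shows "a \<in> V" "b \<in> V" "E b a"
  using assms unfolding graph_def by blast+

lemma finite_Dc_paths:
  assumes "graph V E"
  shows "finite {xs. Dc_path V E k c xs}"
proof (rule finite_subset)
  show "{xs. Dc_path V E k c xs} \<subseteq> {xs. set xs \<subseteq> V \<and> length xs \<le> card V}"
  proof
    fix xs
    assume "xs \<in> {xs. Dc_path V E k c xs}"
    then have "distinct xs" "set xs \<subseteq> V"
      by (auto simp: Dc_path_def)
    moreover have "finite V"
      using graph_finite[OF assms] .
    ultimately show "xs \<in> {xs. set xs \<subseteq> V \<and> length xs \<le> card V}"
      by (metis card_mono distinct_card mem_Collect_eq)
  qed
  show "finite {xs. set xs \<subseteq> V \<and> length xs \<le> card V}"
    using finite_lists_length_le[OF graph_finite[OF assms]] .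
qed

definition Dc_level :: "'a set \<Rightarrow> ('a \<Rightarrow> 'a \<Rightarrow> bool) \<Rightarrow> nat \<Rightarrow> ('a \<Rightarrow> nat) \<Rightarrow> 'a \<Rightarrow> nat" where
  "Dc_level V E k c v = Max {length xs | xs. Dc_path V E k c xs \<and> hd xs = v}"

lemma
  assumes "graph V E"
  shows length_le_Dc_level: "Dc_path V E k c xs \<Longrightarrow> length xs \<le> Dc_level V E k c (hd xs)"
    and Dc_level_attained:
      "v \<in> V \<Longrightarrow> \<exists>xs. Dc_path V E k c xs \<and> hd xs = v \<and> length xs = Dc_level V E k c v"
    and Dc_level_le_height: "v \<in> V \<Longrightarrow> Dc_level V E k c v \<le> height V E k c"
proof -
  have finite_lengths: "finite {length xs | xs. Dc_path V E k c xs \<and> P xs}" for P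
    using finite_Dc_paths[OF assms] by (simp add: setcompr_eq_image)
  show "Dc_path V E k c xs \<Longrightarrow> length xs \<le> Dc_level V E k c (hd xs)"
    unfolding Dc_level_def using finite_lengths by (auto intro: Max_ge)
  assume "v \<in> V"
  then have "Dc_path V E k c [v]"
    by (simp add: Dc_path_def)
  then have nonempty: "{length xs | xs. Dc_path V E k c xs \<and> hd xs = v} \<noteq> {}"
    by force
  show "\<exists>xs. Dc_path V E k c xs \<and> hd xs = v \<and> length xs = Dc_level V E k c v"
    using Max_in[OF finite_lengths nonempty] unfolding Dc_level_def by auto
  show "Dc_level V E k c v \<le> height V E k c"
    unfolding Dc_level_def height_def
    using finite_lengths[of "\<lambda>_. True"] nonempty by (intro Max_mono) auto
qed

lemma Dc_level_pos:
  assumes "graph V E" "v \<in> V"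
  shows "1 \<le> Dc_level V E k c v"
  using length_le_Dc_level[OF assms(1), of k c "[v]"] assms(2) by (simp add: Dc_path_def)

lemma Dc_level_arc_less:
  assumes "graph V E" "Dc_acyclic E k c" and arc: "Dc_arc E k c a b"
  shows "Dc_level V E k c b < Dc_level V E k c a"
proof -
  have "a \<in> V" "b \<in> V"
    using arc graph_edgeD(1,2)[OF assms(1)] unfolding Dc_arc_def by blast+
  then obtain xs where xs: "Dc_path V E k c xs" "hd xs = b" "length xs = Dc_level V E k c b"
    using Dc_level_attained[OF assms(1)] by blast
  have "a \<notin> set xs"
  proof
    assume "a \<in> set xs"
    with xs(1,2) have "(Dc_arc E k c)\<^sup>*\<^sup>* b a"
      using successively_rtranclp_hd unfolding Dc_path_def by fastforce
    with arc have "(Dc_arc E k c)\<^sup>+\<^sup>+ a a"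
      by (rule rtranclp_into_tranclp2)
    with assms(2) show False
      unfolding Dc_acyclic_def by blast
  qed
  with xs(1) \<open>a \<in> V\<close> arc have "Dc_path V E k c (a # xs)"
    unfolding Dc_path_def by (simp add: successively_Cons xs(2))
  then have "length (a # xs) \<le> Dc_level V E k c a"
    using length_le_Dc_level[OF assms(1)] by (metis list.sel(1))
  with xs(3) show ?thesis
    by simp
qed

lemma longest_Dc_path_ends_in_sink:
  assumes "graph V E" "Dc_acyclic E k c"
    and path: "Dc_path V E k c xs" and longest: "length xs = Dc_level V E k c (hd xs)"
  shows "last xs \<in> Dc_sinks V E k c"
proof (rule ccontr)
  assume not_sink: "last xs \<notin> Dc_sinks V E k c"
  have "last xs \<in> V"
    using path unfolding Dc_path_def by auto
  with not_sink obtain y where arc: "Dc_arc E k c (last xs) y"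
    unfolding Dc_sinks_def by blast
  then have "y \<in> V"
    using graph_edgeD(2)[OF assms(1)] unfolding Dc_arc_def by blast
  have "y \<notin> set xs"
  proof
    assume "y \<in> set xs"
    with path have "(Dc_arc E k c)\<^sup>*\<^sup>* y (last xs)"
      using successively_rtranclp_last unfolding Dc_path_def by fastforce
    with arc have "(Dc_arc E k c)\<^sup>+\<^sup>+ (last xs) (last xs)"
      by (rule rtranclp_into_tranclp2)
    with assms(2) show False
      unfolding Dc_acyclic_def by blast
  qed
  with path arc \<open>y \<in> V\<close> have "Dc_path V E k c (xs @ [y])"
    unfolding Dc_path_def by (simp add: successively_append_iff)
  moreover have "xs \<noteq> []"
    using path unfolding Dc_path_def by blast
  ultimately have "length (xs @ [y]) \<le> Dc_level V E k c (hd xs)"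
    using length_le_Dc_level[OF assms(1)] by (metis hd_append)
  with longest show False
    by simp
qed

lemma Dc_level_color_mod:
  assumes "graph V E" "Dc_acyclic E k c" "Dc_sinks V E k c = {s}" "v \<in> V"
  shows "(c v + Dc_level V E k c v) mod k = (c s + 1) mod k"
proof -
  obtain xs where xs: "Dc_path V E k c xs" "hd xs = v" "length xs = Dc_level V E k c v"
    using Dc_level_attained[OF assms(1,4)] by blast
  then have "last xs = s"
    using longest_Dc_path_ends_in_sink[OF assms(1,2)] assms(3) by auto
  with xs show ?thesis
    using Dc_arcs_color_mod[of E k c xs] by (auto simp: Dc_path_def)
qed

lemma proper_coloring_Dc_level_mod:
  assumes "graph V E" "nice_coloring V E k c" "2 \<le> k" "height V E k c < 2 * k - 1"
  shows "proper_coloring V E (k - 1) (\<lambda>v. Dc_level V E k c v mod (k - 1) + 1)"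
    (is "proper_coloring V E (k - 1) ?f")
proof -
  let ?level = "Dc_level V E k c"
  have proper: "proper_coloring V E k c" and acyclic: "Dc_acyclic E k c"
    using assms(2) by (auto simp: nice_coloring_def)
  obtain s where sink: "Dc_sinks V E k c = {s}"
    using assms(2) by (auto simp: nice_coloring_def card_1_singleton_iff)
  have no_conflict: "?f a \<noteq> ?f b"
    if edge: "E a b" and le: "?level b \<le> ?level a" for a b
  proof
    assume "?f a = ?f b"
    have "a \<in> V" "b \<in> V" "E b a"
      using graph_edgeD[OF assms(1) edge] by simp_all
    have colors: "c a \<in> {1..k}" "c b \<in> {1..k}" "c a \<noteq> c b"
      using proper edge \<open>a \<in> V\<close> \<open>b \<in> V\<close> by (auto simp: proper_coloring_def)
    have "1 \<le> ?level b"
      using Dc_level_pos[OF assms(1) \<open>b \<in> V\<close>] .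
    moreover have "?level a < 2 * k - 1"
      using order.strict_trans1[OF Dc_level_le_height[OF assms(1) \<open>a \<in> V\<close>] assms(4)] .
    moreover have "(c a + ?level a) mod k = (c b + ?level b) mod k"
      using Dc_level_color_mod[OF assms(1) acyclic sink] \<open>a \<in> V\<close> \<open>b \<in> V\<close> by simp
    moreover have "?level a mod (k - 1) = ?level b mod (k - 1)"
      using \<open>?f a = ?f b\<close> by simp
    ultimately have "c a mod k = (c b + 1) mod k"
      using mod_eq_Suc_if_shifted_congruent[OF assms(3) colors] le by blast
    with \<open>E b a\<close> have "Dc_arc E k c b a"
      by (simp add: Dc_arc_def)
    then show False
      using Dc_level_arc_less[OF assms(1) acyclic] le by fastforce
  qed
  show ?thesis
    unfolding proper_coloring_def
  proof (intro conjI ballI allI impI)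
    show "?f v \<in> {1..k - 1}" for v
      using assms(3) by (simp add: Suc_leI)
    show "?f a \<noteq> ?f b" if "E a b" for a b
    proof (cases "?level b \<le> ?level a")
      case True
      with that show ?thesis
        by (rule no_conflict)
    next
      case False
      moreover have "E b a"
        using graph_edgeD[OF assms(1) that] by simp
      ultimately show ?thesis
        using no_conflict[of b a] by simp
    qed
  qed
qed

theorem lemma6:
  fixes V :: "'a set" and E :: "'a \<Rightarrow> 'a \<Rightarrow> bool" and c :: "'a \<Rightarrow> nat" and \<chi> :: nat
  assumes "graph V E" and "connected_graph V E"
    and "\<chi> = chromatic_number V E"
    and "nice_coloring V E \<chi> c"
  shows "height V E \<chi> c \<ge> 2 * \<chi> - 1"
proof (rule ccontr)
  assume short: "\<not> ?thesis"
  obtain s where "Dc_sinks V E \<chi> c = {s}"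
    using assms(4) by (auto simp: nice_coloring_def card_1_singleton_iff)
  then have "s \<in> V"
    using Dc_sinks_def[of V E \<chi> c] by blast
  then have "1 \<le> height V E \<chi> c"
    using Dc_level_pos[OF assms(1)] Dc_level_le_height[OF assms(1)] order_trans by blast
  with short have "2 \<le> \<chi>"
    by linarith
  with short have "proper_coloring V E (\<chi> - 1) (\<lambda>v. Dc_level V E \<chi> c v mod (\<chi> - 1) + 1)"
    using proper_coloring_Dc_level_mod[OF assms(1,4)] by simp
  then have "chromatic_number V E \<le> \<chi> - 1"
    unfolding chromatic_number_def
    by (rule Least_le[where P = "\<lambda>k. \<exists>c. proper_coloring V E k c", OF exI])
  with \<open>2 \<le> \<chi>\<close> assms(3) show False
    by linarith
qed

end
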